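(* For every integer $t$, \begin{align*} \sum_{n=1}^\infty\binom{2n}{n}\frac{O_nL_{2n+t}}{12^n}&=\frac{\sqrt3}{2}\bigl(2L_{t+1}\ln\alpha+\sqrt5\,F_{t+1}\ln3\bigr),\\ \sum_{n=1}^\infty\binom{2n}{n}\frac{O_nF_{2n+t}}{12^n}&=\frac{\sqrt{15}}{10}\bigl(2\sqrt5\,F_{t+1}\ln\alpha+L_{t+1}\ln3\bigr), \end{align*} and, for every gibonacci sequence $G_j=G_j(a,b)$, \[ \sum_{n=1}^\infty\binom{2n}{n}\frac{O_nG_{2n+t}}{12^n}=\frac{\sqrt{15}}{10}\bigl(2\sqrt5\,G_{t+1}\ln\alpha+(G_{t+2}+G_t)\ln3\bigr). \]
   Context: $O_n=\sum_{j=1}^n\frac1{2j-1}$. $F_n$ and $L_n$ are the Fibonacci and Lucas numbers ($F_0=0,F_1=1$, $L_0=2,L_1=1$, $u_n=u_{n-1}+u_{n-2}$), extended to all integers by the recurrence. $\alpha=(1+\sqrt5)/2$, $\beta=-1/\alpha$. For numbers $a,b$ not both zero, the gibonacci sequence $G_j=G_j(a,b)$ is defined by $G_0=a$, $G_1=b$, $G_j=G_{j-1}+G_{j-2}$, extended to negative indices by $G_{-j}=G_{-(j-2)}-G_{-(j-1)}$; equivalently $G_j=\frac{(b-a\beta)\alpha^j+(a\alpha-b)\beta^j}{\alpha-\beta}$. *)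

theory Defs
  imports Complex_Main
begin

fun gib_pos :: "real \<Rightarrow> real \<Rightarrow> nat \<Rightarrow> real" where
  "gib_pos a b 0 = a"
| "gib_pos a b (Suc 0) = b"
| "gib_pos a b (Suc (Suc j)) = gib_pos a b (Suc j) + gib_pos a b j"

fun gib_neg :: "real \<Rightarrow> real \<Rightarrow> nat \<Rightarrow> real" where
  "gib_neg a b 0 = a"
| "gib_neg a b (Suc 0) = b - a"
| "gib_neg a b (Suc (Suc j)) = gib_neg a b j - gib_neg a b (Suc j)"

definition gib :: "real \<Rightarrow> real \<Rightarrow> int \<Rightarrow> real" where
  "gib a b k = (if k \<ge> 0 then gib_pos a b (nat k) else gib_neg a b (nat (- k)))"

definition Fib :: "int \<Rightarrow> real" where "Fib k = gib 0 1 k"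
definition Luc :: "int \<Rightarrow> real" where "Luc k = gib 2 1 k"

definition golden :: real where "golden = (1 + sqrt 5) / 2"

definition Oh :: "nat \<Rightarrow> real" where
  "Oh n = (\<Sum>j = 1..n. 1 / (2 * real j - 1))"

end

theory Submission
  imports Defs "HOL-Analysis.Analysis"
begin

(* Multiplying the generating functions of C(2n,n) and of 4^n/n, namely (1 - 4x) powr (-1/2)
   and -ln (1 - 4x), gives  sum C(2n,n) O_n x^n = -ln (1 - 4x) / (2 sqrt (1 - 4x))  for |x| < 1/4,
   because the convolution  sum_(i=1..n) 4^i/i C(2n-2i,n-i)  equals 2 C(2n,n) O_n.
   By Binet's formula G_(2n+t)/12^n is a linear combination of (alpha^2/12)^n and (beta^2/12)^n,
   and a root y of y^2 = y + 1 satisfies 1 - y^2/3 = 1/(3 y^2), so at x = y^2/12 the series equals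
   sqrt 3 |y| ln (3 y^2) / 2. The Lucas and Fibonacci cases then follow from
   L_(t+2) + L_t = 5 F_(t+1) and F_(t+2) + F_t = L_(t+1). *)

lemma central_binomial_Suc:
  "real (Suc n) * real ((2 * Suc n) choose Suc n) = (4 * real n + 2) * real ((2 * n) choose n)"
proof -
  have "Suc n * ((2 * Suc n) choose Suc n) = 2 * (Suc n * ((2 * n + 1) choose n))"
    using Suc_times_binomial[of n "2 * n + 1"] by (simp del: binomial_Suc_Suc)
  also have "Suc n * ((2 * n + 1) choose n) = (2 * n + 1) * ((2 * n) choose n)"
    using Suc_times_binomial_eq[of "2 * n" n] binomial_symmetric[of "Suc n" "2 * n + 1"]
    by (simp del: binomial_Suc_Suc)
  finally show ?thesis
    by (simp only: of_nat_mult [symmetric]) (simp add: algebra_simps del: binomial_Suc_Suc)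
qed

lemma gbinomial_minus_half: "((-1/2::real) gchoose n) * (-4) ^ n = real ((2 * n) choose n)"
proof -
  have "(-1::real) ^ n * (-4) ^ n = 2 ^ (2 * n)"
    by (simp flip: power_mult_distrib add: power_mult)
  moreover have "real ((2 * n) choose n) = fact (2 * n) / (fact n * fact n)"
    by (subst binomial_fact) (simp_all add: mult_2)
  ultimately show ?thesis
    by (simp add: gbinomial_pochhammer fact_double)
qed

lemma central_binomial_sums:
  fixes x :: real
  assumes "\<bar>x\<bar> < 1/4"
  shows "(\<lambda>n. real ((2 * n) choose n) * x ^ n) sums (1 / sqrt (1 - 4 * x))"
proof -
  have "\<bar>-4 * x\<bar> < 1"
    using assms by simp
  then have "(\<lambda>n. ((-1/2) gchoose n) * (-4 * x) ^ n) sums ((1 + -4 * x) powr (-1/2))"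
    by (rule gen_binomial_real)
  moreover have "((-1/2) gchoose n) * (-4 * x) ^ n = real ((2 * n) choose n) * x ^ n" for n
    by (metis gbinomial_minus_half mult.assoc power_mult_distrib)
  moreover have "(1 - 4 * x) powr (-1/2) = 1 / sqrt (1 - 4 * x)"
    using assms by (simp add: powr_minus_divide powr_half_sqrt)
  ultimately show ?thesis
    by simp
qed

(* The summand for n = 0 is 4^0 / 0 = 0 by the convention x / 0 = 0. *)
lemma four_pow_div_sums_ln:
  fixes x :: real
  assumes "\<bar>x\<bar> < 1/4"
  shows "(\<lambda>n. 4 ^ n / real n * x ^ n) sums (- ln (1 - 4 * x))"
proof -
  have "\<bar>-4 * x\<bar> < 1"
    using assms by simp
  from sums_minus[OF ln_series'[OF this]] show ?thesis
    by (simp add: power_mult_distrib)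
qed

lemma Oh_0 [simp]: "Oh 0 = 0"
  by (simp add: Oh_def)

lemma Oh_Suc: "Oh (Suc n) = Oh n + 1 / (2 * real n + 1)"
  by (simp add: Oh_def)

lemma central_binomial_log_convolution_Suc:
  fixes s :: "nat \<Rightarrow> real"
  defines "s n \<equiv> \<Sum>i\<le>n. 4 ^ i / real i * real ((2 * (n - i)) choose (n - i))"
  shows "real (Suc n) * s (Suc n) = (4 * real n + 2) * s n + 4 * real ((2 * n) choose n)"
proof -
  define c where "c m = real ((2 * m) choose m)" for m
  define u where "u i = 4 ^ i * c (Suc n - i)" for i
  have s_eq: "s m = (\<Sum>i = 1..m. 4 ^ i / real i * c (m - i))" for m
    unfolding s_def c_def by (rule sum.mono_neutral_right) auto
  \<comment> \<open>the recurrence of the central binomial coefficients makes the difference telescope\<close>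
  have step: "real (Suc n) * (4 ^ i / real i * c (Suc n - i))
      = (4 * real n + 2) * (4 ^ i / real i * c (n - i)) + (u i - u (Suc i))"
    if "1 \<le> i" "i \<le> n" for i
  proof -
    have "real (Suc (n - i)) * c (Suc (n - i)) = (4 * (real n - real i) + 2) * c (n - i)"
      using central_binomial_Suc[of "n - i"] that by (simp add: c_def)
    moreover have "Suc n - i = Suc (n - i)" and "real (Suc n) = real i + real (Suc (n - i))"
      using that by auto
    ultimately have "real (Suc n) * c (Suc n - i)
        = real i * c (Suc n - i) + (4 * (real n - real i) + 2) * c (n - i)"
      by (simp only: distrib_right)
    then have "real (Suc n) * (4 ^ i / real i * c (Suc n - i))
        = 4 ^ i / real i * (real i * c (Suc n - i) + (4 * (real n - real i) + 2) * c (n - i))"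
      by (metis mult.left_commute)
    also have "\<dots> = (4 * real n + 2) * (4 ^ i / real i * c (n - i)) + (u i - u (Suc i))"
      using that \<open>Suc n - i = Suc (n - i)\<close> by (simp add: u_def field_simps)
    finally show ?thesis .
  qed
  have "s (Suc n) = (\<Sum>i = 1..n. 4 ^ i / real i * c (Suc n - i)) + 4 ^ Suc n / real (Suc n)"
    by (simp add: s_eq c_def del: of_nat_Suc)
  then have "real (Suc n) * s (Suc n)
      = (\<Sum>i = 1..n. real (Suc n) * (4 ^ i / real i * c (Suc n - i))) + 4 ^ Suc n"
    by (simp add: distrib_left sum_distrib_left del: of_nat_Suc)
  also have "(\<Sum>i = 1..n. real (Suc n) * (4 ^ i / real i * c (Suc n - i)))
      = (\<Sum>i = 1..n. (4 * real n + 2) * (4 ^ i / real i * c (n - i)) + (u i - u (Suc i)))"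
    by (intro sum.cong refl step) auto
  also have "\<dots> = (4 * real n + 2) * s n + (u 1 - u (Suc n))"
    using sum_Suc_diff[of 1 n "\<lambda>i. - u i"] by (simp add: s_eq sum.distrib sum_distrib_left)
  finally show ?thesis
    by (simp add: u_def c_def)
qed

lemma central_binomial_log_convolution:
  "(\<Sum>i\<le>n. 4 ^ i / real i * real ((2 * (n - i)) choose (n - i)))
     = 2 * real ((2 * n) choose n) * Oh n"
proof (induction n)
  case 0
  then show ?case
    by simp
next
  case (Suc n)
  define c where "c = real ((2 * n) choose n)"
  define c' where "c' = real ((2 * Suc n) choose Suc n)"
  have rec: "real (Suc n) * c' = (4 * real n + 2) * c"
    unfolding c_def c'_def by (rule central_binomial_Suc)
  have "2 * real n + 1 \<noteq> 0"
    by linarith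
  have "real (Suc n) * (2 * c' * Oh (Suc n))
      = 2 * (real (Suc n) * c') * (Oh n + 1 / (2 * real n + 1))"
    by (simp only: Oh_Suc mult_ac)
  also have "\<dots> = (4 * real n + 2) * (2 * c * Oh n) + 4 * c"
    unfolding rec using \<open>2 * real n + 1 \<noteq> 0\<close> by (simp add: field_simps)
  finally have "real (Suc n) * (\<Sum>i\<le>Suc n. 4 ^ i / real i * real ((2 * (Suc n - i)) choose (Suc n - i)))
      = real (Suc n) * (2 * c' * Oh (Suc n))"
    unfolding central_binomial_log_convolution_Suc Suc.IH c_def by (rule sym)
  then show ?case
    unfolding c'_def by (rule mult_left_cancel [THEN iffD1, rotated]) simp
qed

lemma central_binomial_Oh_sums:
  fixes x :: real
  assumes "\<bar>x\<bar> < 1/4"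
  shows "(\<lambda>n. real ((2 * n) choose n) * Oh n * x ^ n) sums (- ln (1 - 4 * x) / (2 * sqrt (1 - 4 * x)))"
proof -
  define a where "a n = 4 ^ n / real n * x ^ n" for n
  define b where "b n = real ((2 * n) choose n) * x ^ n" for n
  have "\<bar>\<bar>x\<bar>\<bar> < 1/4"
    using assms by simp
  then have "summable (\<lambda>n. norm (a n))" "summable (\<lambda>n. norm (b n))"
    using sums_summable[OF four_pow_div_sums_ln] sums_summable[OF central_binomial_sums]
    by (simp_all add: a_def b_def abs_mult power_abs)
  then have "(\<lambda>k. \<Sum>i\<le>k. a i * b (k - i)) sums (suminf a * suminf b)"
    by (rule Cauchy_product_sums)
  moreover have "suminf a = - ln (1 - 4 * x)"
    using four_pow_div_sums_ln[OF assms] unfolding a_def by (rule sums_unique [symmetric])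
  moreover have "suminf b = 1 / sqrt (1 - 4 * x)"
    using central_binomial_sums[OF assms] unfolding b_def by (rule sums_unique [symmetric])
  moreover have "(\<Sum>i\<le>k. a i * b (k - i)) = 2 * (real ((2 * k) choose k) * Oh k * x ^ k)" for k
  proof -
    have "(\<Sum>i\<le>k. a i * b (k - i))
        = (\<Sum>i\<le>k. 4 ^ i / real i * real ((2 * (k - i)) choose (k - i))) * x ^ k"
      unfolding sum_distrib_right
      by (intro sum.cong refl) (simp add: a_def b_def mult_ac flip: power_add)
    then show ?thesis
      by (simp only: central_binomial_log_convolution mult.assoc)
  qed
  ultimately have "(\<lambda>k. 2 * (real ((2 * k) choose k) * Oh k * x ^ k))
      sums (- ln (1 - 4 * x) * (1 / sqrt (1 - 4 * x)))"
    by simp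
  from sums_divide[OF this, of 2] show ?thesis
    by (simp add: mult.commute)
qed

definition golden_conj :: real where
  "golden_conj = (1 - sqrt 5) / 2"

lemma golden_square: "golden\<^sup>2 = golden + 1"
  by (simp add: golden_def power2_eq_square field_simps)

lemma golden_conj_square: "golden_conj\<^sup>2 = golden_conj + 1"
  by (simp add: golden_conj_def power2_eq_square field_simps)

lemma golden_minus_golden_conj: "golden - golden_conj = sqrt 5"
  by (simp add: golden_def golden_conj_def field_simps)

lemma golden_times_golden_conj: "golden * golden_conj = -1"
  by (simp add: golden_def golden_conj_def field_simps)

lemma golden_pos: "golden > 0"
  by (simp add: golden_def add_pos_pos)

lemma golden_conj_neg: "golden_conj < 0"
  by (simp add: golden_conj_def)

lemma central_binomial_Oh_sums_golden_root:
  fixes y :: real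
  assumes y: "y\<^sup>2 = y + 1"
  shows "(\<lambda>n. real ((2 * n) choose n) * Oh n * (y\<^sup>2 / 12) ^ n) sums (sqrt 3 * \<bar>y\<bar> * ln (3 * y\<^sup>2) / 2)"
proof -
  have "y < 2"
  proof (rule ccontr)
    assume "\<not> y < 2"
    then have "y\<^sup>2 \<ge> 2 * y"
      by (simp add: power2_eq_square)
    with y \<open>\<not> y < 2\<close> show False
      by linarith
  qed
  moreover have "y + 1 \<ge> 0"
    unfolding y [symmetric] by simp
  ultimately have x: "\<bar>y\<^sup>2 / 12\<bar> < 1/4"
    using y by simp
  have "y \<noteq> 0"
    using y by auto
  moreover have "(3 - y\<^sup>2) * y\<^sup>2 = 1"
    using y by algebra
  ultimately have "3 - y\<^sup>2 = 1 / y\<^sup>2"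
    by (simp add: eq_divide_eq)
  then have "1 - 4 * (y\<^sup>2 / 12) = 1 / (3 * y\<^sup>2)"
    by (simp add: field_simps)
  then have "- ln (1 - 4 * (y\<^sup>2 / 12)) / (2 * sqrt (1 - 4 * (y\<^sup>2 / 12)))
      = sqrt 3 * \<bar>y\<bar> * ln (3 * y\<^sup>2) / 2"
    by (simp add: ln_div real_sqrt_divide real_sqrt_mult)
  then show ?thesis
    using central_binomial_Oh_sums[OF x] by (simp only:)
qed

lemma gib_of_nat: "gib a b (int m) = gib_pos a b m"
  by (simp add: gib_def)

lemma gib_minus_of_nat: "gib a b (- int m) = gib_neg a b m"
  unfolding gib_def by (cases m) (auto simp del: of_nat_Suc)

lemma gib_0 [simp]: "gib a b 0 = a"
  by (simp add: gib_def)

lemma gib_1 [simp]: "gib a b 1 = b"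
  using gib_of_nat[of a b 1] by simp

lemma gib_add_2: "gib a b (k + 2) = gib a b (k + 1) + gib a b k"
proof (cases k)
  case (nonneg m)
  then have "k + 1 = int (Suc m)" "k + 2 = int (Suc (Suc m))"
    by simp_all
  with nonneg show ?thesis
    by (simp only: gib_of_nat gib_pos.simps)
next
  case (neg n)
  show ?thesis
  proof (cases n)
    case 0
    with neg show ?thesis
      using gib_minus_of_nat[of a b 1] by simp
  next
    case (Suc m)
    with neg have "k = - int (Suc (Suc m))" "k + 1 = - int (Suc m)" "k + 2 = - int m"
      by simp_all
    then show ?thesis
      by (simp only: gib_minus_of_nat gib_neg.simps)
  qed
qed

lemma gib_unique:
  fixes f :: "int \<Rightarrow> real"
  assumes rec: "\<And>k. f (k + 2) = f (k + 1) + f k" and "f 0 = a" "f 1 = b"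
  shows "f k = gib a b k"
proof -
  define h where "h k = f k - gib a b k" for k
  have h_rec: "h (k + 2) = h (k + 1) + h k" for k
    using rec[of k] gib_add_2[of a b k] by (simp add: h_def)
  have "h 0 = 0" "h 1 = 0"
    using assms by (simp_all add: h_def)
  have up: "h (int n) = 0 \<and> h (int n + 1) = 0" for n
  proof (induction n)
    case (Suc n)
    then show ?case
      using h_rec[of "int n"] by (simp add: add.commute)
  qed (use \<open>h 0 = 0\<close> \<open>h 1 = 0\<close> in simp)
  have down: "h (- int n) = 0 \<and> h (1 - int n) = 0" for n
  proof (induction n)
    case (Suc n)
    then show ?case
      using h_rec[of "- int (Suc n)"] by (simp add: algebra_simps)
  qed (use \<open>h 0 = 0\<close> \<open>h 1 = 0\<close> in simp)
  have "h k = 0"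
    using up[of "nat k"] down[of "nat (- k)"] by (cases "k \<ge> 0") simp_all
  then show ?thesis
    by (simp add: h_def)
qed

lemma gib_shift: "gib a b (k + 1) = gib b (a + b) k"
proof (rule gib_unique)
  show "gib a b (k + 2 + 1) = gib a b (k + 1 + 1) + gib a b (k + 1)" for k
    using gib_add_2[of a b "k + 1"] by (simp add: add.assoc)
  show "gib a b (0 + 1) = b" "gib a b (1 + 1) = a + b"
    using gib_add_2[of a b 0] by simp_all
qed

lemma gib_scale: "c * gib a b k = gib (c * a) (c * b) k"
  by (rule gib_unique) (simp_all add: gib_add_2 distrib_left)

lemma gib_add: "gib a b k + gib c d k = gib (a + c) (b + d) k"
  by (rule gib_unique) (simp_all add: gib_add_2)

lemma gib_add_2_add: "gib a b (k + 2) + gib a b k = gib (2 * a + b) (a + 3 * b) k"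
proof -
  have "gib a b (k + 2) = gib (a + b) (a + 2 * b) k"
    using gib_shift[of a b "k + 1"] gib_shift[of b "a + b" k] by (simp add: algebra_simps)
  then show ?thesis
    by (simp add: gib_add algebra_simps)
qed

lemma golden_root_powi_add_2:
  fixes y :: real
  assumes "y\<^sup>2 = y + 1"
  shows "y powi (k + 2) = y powi (k + 1) + y powi k"
proof -
  have "y \<noteq> 0"
    using assms by auto
  then have "y powi (k + 2) = y powi k * y\<^sup>2" "y powi (k + 1) = y powi k * y"
    by (simp_all add: power_int_add)
  then show ?thesis
    using assms by (simp add: algebra_simps)
qed

lemma gib_binet:
  "gib a b k = ((b - a * golden_conj) * golden powi k + (a * golden - b) * golden_conj powi k) / sqrt 5"
proof (rule gib_unique [symmetric])
  show "((b - a * golden_conj) * golden powi (k + 2) + (a * golden - b) * golden_conj powi (k + 2)) / sqrt 5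
      = ((b - a * golden_conj) * golden powi (k + 1) + (a * golden - b) * golden_conj powi (k + 1)) / sqrt 5
        + ((b - a * golden_conj) * golden powi k + (a * golden - b) * golden_conj powi k) / sqrt 5" for k
    using golden_root_powi_add_2[OF golden_square, of k] golden_root_powi_add_2[OF golden_conj_square, of k]
    by (simp add: field_simps)
  show "((b - a * golden_conj) * golden powi 0 + (a * golden - b) * golden_conj powi 0) / sqrt 5 = a"
    "((b - a * golden_conj) * golden powi 1 + (a * golden - b) * golden_conj powi 1) / sqrt 5 = b"
    using golden_minus_golden_conj by (simp_all add: field_simps) algebra+
qed

lemma gib_central_binomial_Oh_sums:
  "(\<lambda>n. real ((2 * n) choose n) * Oh n * gib a b (2 * int n + t) / 12 ^ n)
     sums (sqrt 15 / 10 * (2 * sqrt 5 * gib a b (t + 1) * ln golden + (gib a b (t + 2) + gib a b t) * ln 3))"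
proof -
  define p where "p = (b - a * golden_conj) * golden powi t / sqrt 5"
  define q where "q = (a * golden - b) * golden_conj powi t / sqrt 5"
  have "golden \<noteq> 0" "golden_conj \<noteq> 0"
    using golden_pos golden_conj_neg by auto
  then have binet: "gib a b (int m + t) = p * golden ^ m + q * golden_conj ^ m" for m
    by (simp add: gib_binet p_def q_def power_int_add field_simps)
  have terms: "real ((2 * n) choose n) * Oh n * gib a b (2 * int n + t) / 12 ^ n
      = p * (real ((2 * n) choose n) * Oh n * (golden\<^sup>2 / 12) ^ n)
        + q * (real ((2 * n) choose n) * Oh n * (golden_conj\<^sup>2 / 12) ^ n)" for n
    using binet[of "2 * n"] by (simp only: power_mult) (simp add: power_divide field_simps)
  have series: "(\<lambda>n. p * (real ((2 * n) choose n) * Oh n * (golden\<^sup>2 / 12) ^ n)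
        + q * (real ((2 * n) choose n) * Oh n * (golden_conj\<^sup>2 / 12) ^ n))
      sums (p * (sqrt 3 * \<bar>golden\<bar> * ln (3 * golden\<^sup>2) / 2)
        + q * (sqrt 3 * \<bar>golden_conj\<bar> * ln (3 * golden_conj\<^sup>2) / 2))"
    by (intro sums_add sums_mult central_binomial_Oh_sums_golden_root golden_square golden_conj_square)
  have limit: "p * (sqrt 3 * \<bar>golden\<bar> * ln (3 * golden\<^sup>2) / 2)
        + q * (sqrt 3 * \<bar>golden_conj\<bar> * ln (3 * golden_conj\<^sup>2) / 2)
      = sqrt 15 / 10 * (2 * sqrt 5 * gib a b (t + 1) * ln golden + (gib a b (t + 2) + gib a b t) * ln 3)"
  proof -
    have "golden_conj\<^sup>2 = 1 / golden\<^sup>2"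
      using golden_times_golden_conj \<open>golden \<noteq> 0\<close> by (simp add: field_simps power2_eq_square)
    then have logs: "\<bar>golden\<bar> = golden" "\<bar>golden_conj\<bar> = - golden_conj"
        "ln (3 * golden\<^sup>2) = ln 3 + 2 * ln golden" "ln (3 * golden_conj\<^sup>2) = ln 3 - 2 * ln golden"
      using golden_pos golden_conj_neg by (simp_all add: ln_mult ln_div ln_realpow)
    have "gib a b (t + 1) = p * golden + q * golden_conj"
      using binet[of 1] by (simp add: add.commute)
    moreover have "gib a b (t + 2) + gib a b t = sqrt 5 * (p * golden - q * golden_conj)"
      using binet[of 2] binet[of 0] golden_square golden_conj_square golden_minus_golden_conj
        golden_times_golden_conj by (simp add: add.commute) algebra
    moreover have "sqrt 15 = sqrt 3 * sqrt 5" "sqrt 5 * sqrt 5 = 5"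
      by (simp_all flip: real_sqrt_mult)
    ultimately show ?thesis
      unfolding logs by algebra
  qed
  show ?thesis
    unfolding terms limit [symmetric] by (rule series)
qed

lemma Luc_add_2_add: "Luc (k + 2) + Luc k = 5 * Fib (k + 1)"
  by (simp add: Luc_def Fib_def gib_add_2_add gib_shift gib_scale)

lemma Fib_add_2_add: "Fib (k + 2) + Fib k = Luc (k + 1)"
  by (simp add: Luc_def Fib_def gib_add_2_add gib_shift)

theorem theorem17:
  fixes t :: int
  shows "((\<lambda>m. let n = Suc m in
            real ((2 * n) choose n) * Oh n * Luc (2 * int n + t) / 12 ^ n)
          sums (sqrt 3 / 2 * (2 * Luc (t + 1) * ln golden + sqrt 5 * Fib (t + 1) * ln 3)))
       \<and> ((\<lambda>m. let n = Suc m in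
            real ((2 * n) choose n) * Oh n * Fib (2 * int n + t) / 12 ^ n)
          sums (sqrt 15 / 10 * (2 * sqrt 5 * Fib (t + 1) * ln golden + Luc (t + 1) * ln 3)))
       \<and> (\<forall>a b :: real. \<not> (a = 0 \<and> b = 0) \<longrightarrow>
          ((\<lambda>m. let n = Suc m in
            real ((2 * n) choose n) * Oh n * gib a b (2 * int n + t) / 12 ^ n)
          sums (sqrt 15 / 10 * (2 * sqrt 5 * gib a b (t + 1) * ln golden
                 + (gib a b (t + 2) + gib a b t) * ln 3))))"
proof -
  have gib_sums: "(\<lambda>m. let n = Suc m in
            real ((2 * n) choose n) * Oh n * gib a b (2 * int n + t) / 12 ^ n)
          sums (sqrt 15 / 10 * (2 * sqrt 5 * gib a b (t + 1) * ln golden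
                 + (gib a b (t + 2) + gib a b t) * ln 3))" for a b
    unfolding Let_def using gib_central_binomial_Oh_sums[of a b t] by (subst sums_Suc_iff) simp
  have "sqrt 15 = sqrt 3 * sqrt 5" "sqrt 5 * sqrt 5 = 5"
    by (simp_all flip: real_sqrt_mult)
  then have Luc_limit: "sqrt 3 / 2 * (2 * Luc (t + 1) * ln golden + sqrt 5 * Fib (t + 1) * ln 3)
      = sqrt 15 / 10 * (2 * sqrt 5 * Luc (t + 1) * ln golden + (Luc (t + 2) + Luc t) * ln 3)"
    unfolding Luc_add_2_add by algebra
  have Fib_limit: "sqrt 15 / 10 * (2 * sqrt 5 * Fib (t + 1) * ln golden + Luc (t + 1) * ln 3)
      = sqrt 15 / 10 * (2 * sqrt 5 * Fib (t + 1) * ln golden + (Fib (t + 2) + Fib t) * ln 3)"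
    by (simp only: Fib_add_2_add)
  show ?thesis
    unfolding Luc_limit Fib_limit unfolding Luc_def Fib_def using gib_sums by blast
qed

end
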